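(* Let $X$ be a Banach space, $\Omega\in L(X)$ an isomorphism of $X$ onto itself, $\tau>0$ and $\varphi\in C^{2}([-2\tau,0],X)$. Then the unique classical solution of $$\ddot x(t)-\Omega^{2}x(t-2\tau)=0\ (t\ge0),\qquad x(t)=\varphi(t)\ (t\in[-2\tau,0])$$ is given for $t\in[-2\tau,\infty)$ by $$x(t)=x_1(t+\tau;\Omega)\varphi(-2\tau)+x_2(t+2\tau;\Omega)\dot\varphi(-2\tau)+\int_{-2\tau}^{0}x_2(t-s;\Omega)\ddot\varphi(s)\,ds.$$
   Context: For $A\in L(X)$, $\exp_\tau(t;A)=0$ for $t<-\tau$, $=\mathrm{id}_X$ for $-\tau\le t<0$, and $=\sum_{j=0}^{k}A^{j}\frac{(t-(j-1)\tau)^{j}}{j!}$ for $(k-1)\tau\le t<k\tau$, $k\in\mathbb N$. For $t\in\mathbb R$, $x_1(t;\Omega):=\tfrac12(\exp_\tau(t;\Omega)+\exp_\tau(t;-\Omega))$ and $x_2(t;\Omega):=\tfrac12\Omega^{-1}(\exp_\tau(t;\Omega)-\exp_\tau(t;-\Omega))$; in particular $x_2(t;\Omega)=0$ for all $t<0$ and $x_1(t;\Omega)=0$ for $t<-\tau$. A classical solution of $\ddot x(t)-\Omega^2x(t-2\tau)=f(t)$ ($t\ge0$), $x=\varphi$ on $[-2\tau,0]$, is a function $x\in C^{1}([-2\tau,\infty),X)\cap C^{2}([-2\tau,0],X)\cap C^{2}([0,\infty),X)$ (one-sided derivatives at endpoints) satisfying these equations pointwise. *)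

theory Defs
  imports "HOL-Analysis.Analysis"
begin

definition blinfun_pow :: "('a::real_normed_vector \<Rightarrow>\<^sub>L 'a) \<Rightarrow> nat \<Rightarrow> ('a \<Rightarrow>\<^sub>L 'a)" where
  "blinfun_pow A j = ((\<lambda>B. A o\<^sub>L B) ^^ j) id_blinfun"

text \<open>Delayed exponential exp_tau(t;A). For t >= 0 the index k with (k-1)tau <= t < k tau
  is k = floor(t/tau) + 1.\<close>
definition exp_tau :: "real \<Rightarrow> ('a::real_normed_vector \<Rightarrow>\<^sub>L 'a) \<Rightarrow> real \<Rightarrow> ('a \<Rightarrow>\<^sub>L 'a)" where
  "exp_tau \<tau> A t =
     (if t < - \<tau> then 0
      else if t < 0 then id_blinfun
      else (\<Sum>j = 0..nat (\<lfloor>t / \<tau>\<rfloor> + 1).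
              ((t - (real j - 1) * \<tau>) ^ j / fact j) *\<^sub>R blinfun_pow A j))"

text \<open>Inverse of an isomorphism Omega in L(X) (bounded by the open mapping theorem).\<close>
definition inv_blinfun :: "('a::real_normed_vector \<Rightarrow>\<^sub>L 'a) \<Rightarrow> ('a \<Rightarrow>\<^sub>L 'a)" where
  "inv_blinfun \<Omega> = Blinfun (inv (blinfun_apply \<Omega>))"

definition x1 :: "real \<Rightarrow> ('a::real_normed_vector \<Rightarrow>\<^sub>L 'a) \<Rightarrow> real \<Rightarrow> ('a \<Rightarrow>\<^sub>L 'a)" where
  "x1 \<tau> \<Omega> t = (1/2) *\<^sub>R (exp_tau \<tau> \<Omega> t + exp_tau \<tau> (- \<Omega>) t)"

definition x2 :: "real \<Rightarrow> ('a::real_normed_vector \<Rightarrow>\<^sub>L 'a) \<Rightarrow> real \<Rightarrow> ('a \<Rightarrow>\<^sub>L 'a)" where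
  "x2 \<tau> \<Omega> t = (1/2) *\<^sub>R (inv_blinfun \<Omega> o\<^sub>L (exp_tau \<tau> \<Omega> t - exp_tau \<tau> (- \<Omega>) t))"

definition C2_with :: "real \<Rightarrow> real \<Rightarrow> (real \<Rightarrow> 'a::real_normed_vector) \<Rightarrow> (real \<Rightarrow> 'a) \<Rightarrow> (real \<Rightarrow> 'a) \<Rightarrow> bool" where
  "C2_with a b f f' f'' \<longleftrightarrow>
     (\<forall>t\<in>{a..b}. (f has_vector_derivative f' t) (at t within {a..b})) \<and>
     (\<forall>t\<in>{a..b}. (f' has_vector_derivative f'' t) (at t within {a..b})) \<and>
     continuous_on {a..b} f''"

definition classical_solution ::
  "('a::real_normed_vector \<Rightarrow>\<^sub>L 'a) \<Rightarrow> real \<Rightarrow> (real \<Rightarrow> 'a) \<Rightarrow> (real \<Rightarrow> 'a) \<Rightarrow> (real \<Rightarrow> 'a) \<Rightarrow> bool" where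
  "classical_solution \<Omega> \<tau> f \<phi> x \<longleftrightarrow>
     (\<exists>x' xl'' xr''.
        (\<forall>t\<in>{-2*\<tau>..}. (x has_vector_derivative x' t) (at t within {-2*\<tau>..})) \<and>
        continuous_on {-2*\<tau>..} x' \<and>
        (\<forall>t\<in>{-2*\<tau>..0}. (x' has_vector_derivative xl'' t) (at t within {-2*\<tau>..0})) \<and>
        continuous_on {-2*\<tau>..0} xl'' \<and>
        (\<forall>t\<in>{0..}. (x' has_vector_derivative xr'' t) (at t within {0..})) \<and>
        continuous_on {0..} xr'' \<and>
        (\<forall>t\<in>{0..}. xr'' t - blinfun_pow \<Omega> 2 (x (t - 2*\<tau>)) = f t) \<and>
        (\<forall>t\<in>{-2*\<tau>..0}. x t = \<phi> t))"

end

theory Submission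
  imports Defs
begin

text \<open>On \<open>[-2\<tau>, 0]\<close> one has \<open>x\<^sub>1(t+\<tau>) = id\<close>, \<open>x\<^sub>2(t+2\<tau>) = t+2\<tau>\<close> and
  \<open>x\<^sub>2(t-s) = (t-s)\<^sub>+\<close>, so the formula is Taylor's expansion of \<open>\<phi>\<close> around \<open>-2\<tau>\<close> with
  integral remainder and reproduces \<open>\<phi>\<close>. For \<open>t \<ge> 0\<close> the delayed exponential satisfies
  \<open>exp\<^sub>\<tau>'(t;A) = A exp\<^sub>\<tau>(t-\<tau>;A)\<close>, whence \<open>x\<^sub>2' = x\<^sub>1(\<cdot>-\<tau>)\<close> and
  \<open>x\<^sub>1' = \<Omega>\<^sup>2 x\<^sub>2(\<cdot>-\<tau>)\<close>; differentiating twice (under the integral sign) gives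
  \<open>x''(t) = \<Omega>\<^sup>2 x(t-2\<tau>)\<close>. The identity \<open>x\<^sub>2' = x\<^sub>1(\<cdot>-\<tau>)\<close> needs \<open>\<Omega>\<^sup>-\<^sup>1 \<Omega> = id\<close>
  for the bounded operator \<open>\<Omega>\<^sup>-\<^sup>1\<close>, i.e.\ the bounded inverse theorem (a consequence of
  Baire's theorem); otherwise \<open>inv_blinfun\<close> is a junk value. Uniqueness is the method of steps: the difference \<open>z\<close> of two
  solutions vanishes on \<open>[-2\<tau>,0]\<close>, and if it vanishes on \<open>[-2\<tau>,2n\<tau>]\<close> then
  \<open>z'' = 0\<close> on \<open>[0,2(n+1)\<tau>]\<close> with \<open>z(0) = z'(0) = 0\<close>.\<close>

lemma has_vector_derivative_within_Un:
  assumes "(f has_vector_derivative f') (at x within S)" "(f has_vector_derivative f') (at x within T)"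
  shows "(f has_vector_derivative f') (at x within S \<union> T)"
  using assms unfolding has_vector_derivative_def has_derivative_within
  by (simp add: Lim_within_Un)

lemma has_vector_derivative_within_atLeast_glue:
  fixes f :: "real \<Rightarrow> 'a::real_normed_vector"
  assumes ab: "a \<le> b"
    and left: "\<And>u. u \<in> {a..b} \<Longrightarrow> (f has_vector_derivative f' u) (at u within {a..b})"
    and right: "\<And>u. u \<in> {b..} \<Longrightarrow> (f has_vector_derivative f' u) (at u within {b..})"
    and u: "u \<in> {a..}"
  shows "(f has_vector_derivative f' u) (at u within {a..})"
proof -
  consider "u < b" | "u = b" | "u > b" by linarith
  then show ?thesis
  proof cases
    case 1
    have "at u within {a..} = at u within {a..b}"
      by (rule at_within_nhd[of _ "{..<b}"]) (use 1 in auto)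
    then show ?thesis using left[of u] 1 u by auto
  next
    case 2
    have "{a..} = {a..b} \<union> {b..}" using ab by auto
    then show ?thesis using left[of u] right[of u] 2 ab by (auto intro: has_vector_derivative_within_Un)
  next
    case 3
    have "at u within {a..} = at u within {b..}"
      by (rule at_within_nhd[of _ "{b<..}"]) (use 3 ab in auto)
    then show ?thesis using right[of u] 3 by auto
  qed
qed

lemma has_vector_derivative_imp_continuous_on:
  assumes "\<And>x. x \<in> S \<Longrightarrow> (f has_vector_derivative f' x) (at x within S)"
  shows "continuous_on S f"
  unfolding continuous_on_eq_continuous_within
  using assms has_vector_derivative_continuous by blast

lemma has_vector_derivative_shift_within:
  fixes f :: "real \<Rightarrow> 'a::real_normed_vector"
  assumes f: "(f has_vector_derivative f') (at (x + c) within T)" and sub: "(\<lambda>x. x + c) ` S \<subseteq> T"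
  shows "((\<lambda>x. f (x + c)) has_vector_derivative f') (at x within S)"
proof -
  have "((\<lambda>x. x + c) has_vector_derivative 1) (at x within S)"
    by (auto intro!: derivative_eq_intros)
  from vector_diff_chain_within[OF this has_vector_derivative_within_subset[OF f sub]]
  show ?thesis by (simp add: o_def)
qed

lemma has_vector_derivative_blinfun_apply:
  fixes F :: "real \<Rightarrow> 'a::real_normed_vector \<Rightarrow>\<^sub>L 'b::real_normed_vector"
  shows "(F has_vector_derivative D) net \<Longrightarrow> ((\<lambda>t. F t v) has_vector_derivative D v) net"
  by (rule bounded_linear.has_vector_derivative[OF blinfun.bounded_linear_left])

section \<open>The bounded inverse theorem\<close>

lemma bij_blinfun_approx_preimage:
  fixes T :: "'a::banach \<Rightarrow>\<^sub>L 'b::banach"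
  assumes bij: "bij (blinfun_apply T)"
  shows "\<exists>M\<ge>0. \<forall>y e. e > 0 \<longrightarrow> (\<exists>x. norm x \<le> M * norm y \<and> norm (T x - y) < e)"
proof -
  define K where "K n = closure (blinfun_apply T ` cball 0 (real n))" for n
  have cover: "\<Union>(range K) = UNIV"
  proof -
    { fix y
      obtain x where x: "y = T x" using bij by (metis bij_pointE)
      have "T x \<in> blinfun_apply T ` cball 0 (real (nat \<lceil>norm x\<rceil>))" by (intro imageI) simp
      then have "y \<in> K (nat \<lceil>norm x\<rceil>)" unfolding K_def x by (rule subsetD[OF closure_subset])
      then have "y \<in> \<Union>(range K)" by blast }
    then show ?thesis by blast
  qed
  have "\<exists>n. interior (K n) \<noteq> {}"
  proof (rule ccontr)
    assume "\<not> ?thesis"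
    then have "Met_TC.mtopology interior_of \<Union>(range K) = {}"
      by (intro Met_TC.metric_Baire_category_alt) (auto simp: K_def complete_UNIV)
    then show False using cover by simp
  qed
  then obtain n y0 where "y0 \<in> interior (K n)" by blast
  then obtain r where r: "r > 0" "ball y0 r \<subseteq> K n"
    by (meson mem_interior)
  \<comment> \<open>the ball around \<open>y0\<close> is approximated by images of \<open>cball 0 n\<close>; subtracting an
    approximate preimage of \<open>y0\<close> itself centres the estimate at the origin\<close>
  have small: "\<exists>x. norm x \<le> 2 * real n \<and> norm (T x - z) < e" if z: "norm z < r" and e: "e > 0" for z e
  proof -
    have "y0 + z \<in> K n" using z r(2) by (auto simp: dist_norm)
    then obtain x1 where x1: "x1 \<in> cball 0 (real n)" "dist (T x1) (y0 + z) < e/2"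
      using e unfolding K_def closure_approachable by (metis (no_types, lifting) half_gt_zero imageE)
    have "y0 \<in> K n" using r by auto
    then obtain x2 where x2: "x2 \<in> cball 0 (real n)" "dist (T x2) y0 < e/2"
      using e unfolding K_def closure_approachable by (metis (no_types, lifting) half_gt_zero imageE)
    have "norm (x1 - x2) \<le> norm x1 + norm x2" by (rule norm_triangle_ineq4)
    also have "\<dots> \<le> 2 * real n" using x1 x2 by simp
    finally have 1: "norm (x1 - x2) \<le> 2 * real n" .
    have "T (x1 - x2) - z = (T x1 - (y0 + z)) - (T x2 - y0)"
      by (simp add: blinfun.diff_right)
    then have "norm (T (x1 - x2) - z) \<le> norm (T x1 - (y0 + z)) + norm (T x2 - y0)"
      by (metis norm_triangle_ineq4)
    also have "\<dots> < e" using x1 x2 by (simp add: dist_norm)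
    finally show ?thesis using 1 by blast
  qed
  define M where "M = 4 * real n / r"
  have "M \<ge> 0" using r by (simp add: M_def)
  moreover have "\<exists>x. norm x \<le> M * norm y \<and> norm (T x - y) < e" if e: "e > 0" for y e
  proof (cases "y = 0")
    case True then show ?thesis using e by (intro exI[of _ 0]) simp
  next
    case False
    define l where "l = r / (2 * norm y)"
    have l: "l > 0" using False r by (simp add: l_def)
    have "norm (l *\<^sub>R y) < r" using False r by (simp add: l_def)
    then obtain x' where x': "norm x' \<le> 2 * real n" "norm (T x' - l *\<^sub>R y) < e * l"
      using small[of "l *\<^sub>R y" "e * l"] e l by (meson mult_pos_pos)
    have "norm ((1/l) *\<^sub>R x') = norm x' / l" using l by simp
    also have "\<dots> \<le> 2 * real n / l" using x' l by (simp add: divide_right_mono)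
    also have "\<dots> = M * norm y" using False r by (simp add: l_def M_def field_simps)
    finally have 1: "norm ((1/l) *\<^sub>R x') \<le> M * norm y" .
    have "T ((1/l) *\<^sub>R x') - y = (1/l) *\<^sub>R (T x' - l *\<^sub>R y)"
      using l by (simp add: blinfun.scaleR_right algebra_simps)
    then have "norm (T ((1/l) *\<^sub>R x') - y) = norm (T x' - l *\<^sub>R y) / l"
      using l by simp
    also have "\<dots> < e" using x' l by (simp add: divide_less_eq)
    finally show ?thesis using 1 by blast
  qed
  ultimately show ?thesis by blast
qed

text \<open>Iterating the approximate preimages on the successive residuals \<open>y\<^sub>k\<close> (with
  errors \<open>|y|/2\<^sup>k\<^sup>+\<^sup>1\<close>) produces a geometrically convergent series of preimages.\<close>

lemma bij_blinfun_bounded_preimage: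
  fixes T :: "'a::banach \<Rightarrow>\<^sub>L 'b::banach"
  assumes bij: "bij (blinfun_apply T)"
  obtains M where "M \<ge> 0" "\<And>y. \<exists>x. T x = y \<and> norm x \<le> M * norm y"
proof -
  obtain M where M: "M \<ge> 0" "\<And>y e. e > 0 \<Longrightarrow> \<exists>x. norm x \<le> M * norm y \<and> norm (T x - y) < e"
    using bij_blinfun_approx_preimage[OF bij] by blast
  have "\<exists>x. T x = y \<and> norm x \<le> 2 * M * norm y" for y
  proof (cases "y = 0")
    case True then show ?thesis by (intro exI[of _ 0]) simp
  next
    case False
    have "\<forall>z. \<forall>k. \<exists>x. norm x \<le> M * norm z \<and> norm (T x - z) < norm y / 2 ^ Suc k"
      using M(2) False by simp
    then have "\<exists>p. \<forall>z k. norm (p z k) \<le> M * norm z \<and> norm (T (p z k) - z) < norm y / 2 ^ Suc k"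
      by (subst choice_iff[symmetric], intro allI, subst choice_iff[symmetric]) blast
    then obtain p where p: "\<And>z k. norm (p z k) \<le> M * norm z \<and> norm (T (p z k) - z) < norm y / 2 ^ Suc k"
      by blast
    define ys where "ys = rec_nat y (\<lambda>k yk. yk - T (p yk k))"
    define xs where "xs k = p (ys k) k" for k
    have ys_0: "ys 0 = y" and ys_Suc: "ys (Suc k) = ys k - T (xs k)" for k
      by (simp_all add: ys_def xs_def)
    have ys_bound: "norm (ys k) \<le> norm y / 2 ^ k" for k
    proof (cases k)
      case 0 then show ?thesis by (simp add: ys_0)
    next
      case (Suc j)
      have "norm (ys (Suc j)) = norm (T (xs j) - ys j)" unfolding ys_Suc by (rule norm_minus_commute)
      then show ?thesis using p[of "ys j" j] Suc by (simp add: xs_def)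
    qed
    have xs_bound: "norm (xs k) \<le> M * norm y * (1/2) ^ k" for k
    proof -
      have "norm (xs k) \<le> M * norm (ys k)" using p by (simp add: xs_def)
      also have "\<dots> \<le> M * (norm y / 2 ^ k)" using mult_left_mono[OF ys_bound[of k] M(1)] by simp
      finally show ?thesis by (simp add: power_one_over)
    qed
    have sg: "summable (\<lambda>k. M * norm y * (1/2::real) ^ k)"
      by (intro summable_mult summable_geometric) simp
    have sn: "summable (\<lambda>k. norm (xs k))"
      by (rule summable_comparison_test[OF _ sg]) (use xs_bound in auto)
    have "norm (suminf xs) \<le> (\<Sum>k. norm (xs k))" by (rule summable_norm[OF sn])
    also have "\<dots> \<le> (\<Sum>k. M * norm y * (1/2::real) ^ k)"
      by (rule suminf_le[OF _ sn sg]) (use xs_bound in auto)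
    also have "\<dots> = 2 * M * norm y"
      by (simp add: suminf_mult suminf_geometric)
    finally have bound: "norm (suminf xs) \<le> 2 * M * norm y" .
    have partial: "(\<Sum>k<n. T (xs k)) = y - ys n" for n
      by (induction n) (simp_all add: ys_0 ys_Suc)
    have "ys \<longlonglongrightarrow> 0"
    proof (rule Lim_null_comparison)
      show "\<forall>\<^sub>F n in sequentially. norm (ys n) \<le> norm y * (1/2) ^ n"
        using ys_bound by (simp add: power_one_over)
      show "(\<lambda>n. norm y * (1/2::real) ^ n) \<longlonglongrightarrow> 0"
        by (intro tendsto_mult_right_zero LIMSEQ_power_zero) simp
    qed
    then have "(\<lambda>n. y - ys n) \<longlonglongrightarrow> y - 0" by (intro tendsto_diff tendsto_const)
    then have "(\<lambda>k. T (xs k)) sums y" unfolding sums_def partial by simp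
    moreover have "(\<lambda>k. T (xs k)) sums T (suminf xs)"
      by (rule bounded_linear.sums[OF blinfun.bounded_linear_right summable_sums[OF summable_norm_cancel[OF sn]]])
    ultimately have "T (suminf xs) = y" using sums_unique2 by blast
    then show ?thesis using bound by blast
  qed
  then show ?thesis using M(1) that[of "2 * M"] by simp
qed

theorem bounded_linear_inv_bij_blinfun:
  fixes T :: "'a::banach \<Rightarrow>\<^sub>L 'b::banach"
  assumes bij: "bij (blinfun_apply T)"
  shows "bounded_linear (inv (blinfun_apply T))"
proof -
  obtain M where M: "\<And>y. \<exists>x. T x = y \<and> norm x \<le> M * norm y"
    using bij_blinfun_bounded_preimage[OF bij] by blast
  let ?S = "inv (blinfun_apply T)"
  have TS: "T (?S y) = y" for y using bij by (simp add: bij_is_surj surj_f_inv_f)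
  have ST: "?S (T x) = x" for x using bij by (simp add: bij_is_inj inv_f_f)
  show ?thesis
  proof (rule bounded_linear_intro)
    fix a b
    have "?S (a + b) = ?S (T (?S a + ?S b))" by (simp add: TS blinfun.add_right)
    then show "?S (a + b) = ?S a + ?S b" by (simp add: ST)
  next
    fix r a
    have "?S (r *\<^sub>R a) = ?S (T (r *\<^sub>R ?S a))" by (simp add: TS blinfun.scaleR_right)
    then show "?S (r *\<^sub>R a) = r *\<^sub>R ?S a" by (simp add: ST)
  next
    fix y
    obtain x where x: "T x = y" "norm x \<le> M * norm y" using M by blast
    then show "norm (?S y) \<le> norm y * M" using ST by (auto simp: mult.commute)
  qed
qed

lemma inv_blinfun_cancel_left:
  fixes \<Omega> :: "'a::banach \<Rightarrow>\<^sub>L 'a"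
  shows "bij (blinfun_apply \<Omega>) \<Longrightarrow> inv_blinfun \<Omega> (\<Omega> w) = w"
  unfolding inv_blinfun_def
  by (simp add: bounded_linear_Blinfun_apply[OF bounded_linear_inv_bij_blinfun] bij_is_inj inv_f_f)

lemma inv_blinfun_cancel_right:
  fixes \<Omega> :: "'a::banach \<Rightarrow>\<^sub>L 'a"
  shows "bij (blinfun_apply \<Omega>) \<Longrightarrow> \<Omega> (inv_blinfun \<Omega> w) = w"
  unfolding inv_blinfun_def
  by (simp add: bounded_linear_Blinfun_apply[OF bounded_linear_inv_bij_blinfun] bij_is_surj surj_f_inv_f)

section \<open>The delayed exponential\<close>

lemma blinfun_compose_id_right [simp]: "A o\<^sub>L id_blinfun = A"
  by (rule blinfun_eqI) simp

lemma blinfun_pow_0 [simp]: "blinfun_pow A 0 = id_blinfun"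
  by (simp add: blinfun_pow_def)

lemma blinfun_pow_Suc: "blinfun_pow A (Suc n) = A o\<^sub>L blinfun_pow A n"
  by (simp add: blinfun_pow_def)

lemma blinfun_pow_2: "blinfun_pow A 2 = A o\<^sub>L A"
  by (rule blinfun_eqI) (simp add: numeral_2_eq_2 blinfun_pow_Suc)

definition ramp :: "real \<Rightarrow> real" where
  "ramp x = max x 0"

text \<open>With the positive part in place of \<open>t - (j-1)\<tau>\<close>, the terms \<open>j > k\<close> vanish on
  \<open>[(k-1)\<tau>, k\<tau>)\<close>, so \<open>exp\<^sub>\<tau>\<close> is one fixed differentiable finite sum on any bounded interval.\<close>

definition exp_tau_coeff :: "real \<Rightarrow> nat \<Rightarrow> real \<Rightarrow> real" where
  "exp_tau_coeff \<tau> j t = ramp (t - (real j - 1) * \<tau>) ^ j / fact j"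

lemma exp_tau_coeff_0 [simp]: "exp_tau_coeff \<tau> 0 t = 1"
  by (simp add: exp_tau_coeff_def)

lemma exp_tau_eq_sum:
  assumes tau: "\<tau> > 0" and t: "t \<ge> - \<tau>" and N: "real N \<ge> t / \<tau> + 1"
  shows "exp_tau \<tau> A t = (\<Sum>j = 0..N. exp_tau_coeff \<tau> j t *\<^sub>R blinfun_pow A j)"
proof (cases "t < 0")
  case True
  have "(\<Sum>j = 0..N. exp_tau_coeff \<tau> j t *\<^sub>R blinfun_pow A j)
      = (\<Sum>j \<in> {0}. exp_tau_coeff \<tau> j t *\<^sub>R blinfun_pow A j)"
  proof (rule sum.mono_neutral_right)
    show "\<forall>i\<in>{0..N} - {0}. exp_tau_coeff \<tau> i t *\<^sub>R blinfun_pow A i = 0"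
    proof
      fix i assume i: "i \<in> {0..N} - {0}"
      then have "(real i - 1) * \<tau> \<ge> 0" using tau by simp
      then have "ramp (t - (real i - 1) * \<tau>) = 0" using True by (simp add: ramp_def)
      then show "exp_tau_coeff \<tau> i t *\<^sub>R blinfun_pow A i = 0" using i by (simp add: exp_tau_coeff_def)
    qed
  qed auto
  then show ?thesis using True t by (simp add: exp_tau_def exp_tau_coeff_def ramp_def)
next
  case False
  define m where "m = \<lfloor>t / \<tau>\<rfloor>"
  have m0: "m \<ge> 0" using False tau by (simp add: m_def)
  have m1: "real_of_int m * \<tau> \<le> t" using tau unfolding m_def
    by (metis floor_divide_lower)
  have m2: "t < (real_of_int m + 1) * \<tau>" using tau unfolding m_def
    by (metis floor_divide_upper)
  define k where "k = nat (m + 1)"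
  have kreal: "real k = real_of_int m + 1" using m0 by (simp add: k_def)
  have kN: "k \<le> N"
  proof -
    have "real_of_int m \<le> t / \<tau>" unfolding m_def by simp
    then show ?thesis using N kreal by linarith
  qed
  have "(\<Sum>j = 0..N. exp_tau_coeff \<tau> j t *\<^sub>R blinfun_pow A j)
      = (\<Sum>j = 0..k. exp_tau_coeff \<tau> j t *\<^sub>R blinfun_pow A j)"
  proof (rule sum.mono_neutral_right)
    show "\<forall>i\<in>{0..N} - {0..k}. exp_tau_coeff \<tau> i t *\<^sub>R blinfun_pow A i = 0"
    proof
      fix i assume i: "i \<in> {0..N} - {0..k}"
      then have "real i \<ge> real k + 1" by auto
      then have "(real i - 1) * \<tau> \<ge> real k * \<tau>" using tau by (simp add: mult_right_mono)
      then have "ramp (t - (real i - 1) * \<tau>) = 0" using m2 kreal by (simp add: ramp_def algebra_simps)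
      then show "exp_tau_coeff \<tau> i t *\<^sub>R blinfun_pow A i = 0" using i by (simp add: exp_tau_coeff_def)
    qed
  qed (use kN in auto)
  also have "\<dots> = (\<Sum>j = 0..k. ((t - (real j - 1) * \<tau>) ^ j / fact j) *\<^sub>R blinfun_pow A j)"
  proof (rule sum.cong)
    fix j assume "j \<in> {0..k}"
    then have "(real j - 1) * \<tau> \<le> real_of_int m * \<tau>" using tau kreal by (simp add: mult_right_mono)
    then have "ramp (t - (real j - 1) * \<tau>) = t - (real j - 1) * \<tau>" using m1 by (simp add: ramp_def)
    then show "exp_tau_coeff \<tau> j t *\<^sub>R blinfun_pow A j
        = ((t - (real j - 1) * \<tau>) ^ j / fact j) *\<^sub>R blinfun_pow A j"
      by (simp add: exp_tau_coeff_def)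
  qed simp
  finally show ?thesis using False t by (simp add: exp_tau_def k_def m_def)
qed

lemma ramp_power_has_real_derivative:
  assumes i: "i \<ge> 1"
  shows "((\<lambda>x. ramp x ^ Suc i) has_real_derivative (real (Suc i) * ramp x ^ i)) (at x)"
proof -
  consider "x > 0" | "x < 0" | "x = 0" by linarith
  then show ?thesis
  proof cases
    case 1
    have "((\<lambda>x. x ^ Suc i) has_real_derivative (real (Suc i) * x ^ i)) (at x)"
      by (rule derivative_eq_intros refl | simp)+
    then have "((\<lambda>x. x ^ Suc i) has_real_derivative (real (Suc i) * ramp x ^ i)) (at x)"
      using 1 by (simp add: ramp_def)
    then show ?thesis
      by (rule has_field_derivative_transform_within_open[of _ _ _ "{0<..}"])
         (use 1 in \<open>auto simp: ramp_def\<close>)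
  next
    case 2
    have "((\<lambda>x. 0) has_real_derivative (real (Suc i) * ramp x ^ i)) (at x)"
      using 2 i by (simp add: ramp_def power_0_left)
    then show ?thesis
      by (rule has_field_derivative_transform_within_open[of _ _ _ "{..<0}"])
         (use 2 in \<open>auto simp: ramp_def\<close>)
  next
    case 3
    have cont: "isCont (\<lambda>z. ramp z ^ i) 0"
      unfolding ramp_def by (intro continuous_intros)
    have eq: "ramp z ^ Suc i - ramp 0 ^ Suc i = ramp z ^ i * (z - 0)" for z
      using i by (cases "z \<ge> 0") (auto simp: ramp_def)
    have "((\<lambda>x. ramp x ^ Suc i) has_real_derivative (ramp 0 ^ i)) (at 0)"
      unfolding CARAT_DERIV by (intro exI[of _ "\<lambda>z. ramp z ^ i"]) (use eq cont in auto)
    then show ?thesis using 3 i by (simp add: ramp_def power_0_left)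
  qed
qed

lemma exp_tau_coeff_has_real_derivative:
  assumes t: "t \<ge> 0" and j: "j \<ge> 1"
  shows "(exp_tau_coeff \<tau> j has_real_derivative exp_tau_coeff \<tau> (j - 1) (t - \<tau>)) (at t within {0..})"
proof -
  obtain i where ji: "j = Suc i" using j by (cases j) auto
  show ?thesis
  proof (cases "i = 0")
    case True
    have "((\<lambda>y. y) has_real_derivative 1) (at t within {0..})"
      by (rule DERIV_ident)
    moreover have "y = exp_tau_coeff \<tau> j y" if "y \<in> {0..}" for y
      using that True by (simp add: exp_tau_coeff_def ji ramp_def)
    ultimately have "(exp_tau_coeff \<tau> j has_real_derivative 1) (at t within {0..})"
      using t by (rule_tac has_field_derivative_transform_within[where d=1]) simp_all
    then show ?thesis using True by (simp add: ji exp_tau_coeff_def)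
  next
    case False
    then have i1: "i \<ge> 1" by simp
    have "((\<lambda>y. ramp (y - real i * \<tau>) ^ Suc i / fact (Suc i)) has_real_derivative
            real (Suc i) * ramp (t - real i * \<tau>) ^ i / fact (Suc i)) (at t)"
      using DERIV_chain2[OF ramp_power_has_real_derivative[OF i1] DERIV_diff[OF DERIV_ident DERIV_const]]
      by (intro DERIV_cdivide) (simp only: mult_1_right diff_0_right)
    moreover have "real (Suc i) * p ^ i / fact (Suc i) = p ^ i / fact i" for p :: real
      by (simp add: fact_Suc del: of_nat_Suc)
    moreover have "exp_tau_coeff \<tau> j = (\<lambda>y. ramp (y - real i * \<tau>) ^ Suc i / fact (Suc i))"
      by (simp add: exp_tau_coeff_def ji fun_eq_iff)
    moreover have "exp_tau_coeff \<tau> (j - 1) (t - \<tau>) = ramp (t - real i * \<tau>) ^ i / fact i"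
      by (simp add: exp_tau_coeff_def ji algebra_simps)
    ultimately have "(exp_tau_coeff \<tau> j has_real_derivative exp_tau_coeff \<tau> (j - 1) (t - \<tau>)) (at t)"
      by simp
    then show ?thesis by (rule has_field_derivative_at_within)
  qed
qed

lemma exp_tau_has_vector_derivative:
  assumes tau: "\<tau> > 0" and t: "t \<ge> 0"
  shows "(exp_tau \<tau> A has_vector_derivative (A o\<^sub>L exp_tau \<tau> A (t - \<tau>))) (at t within {0..})"
proof -
  define N where "N = nat \<lfloor>t / \<tau>\<rfloor> + 3"
  have fl: "real_of_int \<lfloor>t / \<tau>\<rfloor> > t / \<tau> - 1" by linarith
  have fl0: "\<lfloor>t / \<tau>\<rfloor> \<ge> 0" using t tau by simp
  have Nr: "real N = real_of_int \<lfloor>t / \<tau>\<rfloor> + 3" using fl0 by (simp add: N_def)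
  have Nr1: "real (N - 1) = real_of_int \<lfloor>t / \<tau>\<rfloor> + 2" using fl0 by (simp add: N_def)
  define F where "F y = (\<Sum>j = 0..N. exp_tau_coeff \<tau> j y *\<^sub>R blinfun_pow A j)" for y
  define D where "D j = (if j = 0 then 0 else exp_tau_coeff \<tau> (j - 1) (t - \<tau>) *\<^sub>R blinfun_pow A j)" for j
  have dF: "(F has_vector_derivative sum D {0..N}) (at t within {0..})"
    unfolding F_def
  proof (rule has_vector_derivative_sum)
    fix j
    show "((\<lambda>y. exp_tau_coeff \<tau> j y *\<^sub>R blinfun_pow A j) has_vector_derivative D j) (at t within {0..})"
    proof (cases "j = 0")
      case True then show ?thesis by (simp add: D_def exp_tau_coeff_def)
    next
      case False
      have "((\<lambda>y. exp_tau_coeff \<tau> j y *\<^sub>R blinfun_pow A j) has_vector_derivative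
              exp_tau_coeff \<tau> j t *\<^sub>R 0 + exp_tau_coeff \<tau> (j - 1) (t - \<tau>) *\<^sub>R blinfun_pow A j)
            (at t within {0..})"
        using False by (intro has_vector_derivative_scaleR exp_tau_coeff_has_real_derivative t
            has_vector_derivative_const) simp
      then show ?thesis using False by (simp add: D_def)
    qed
  qed
  have sD: "sum D {0..N} = A o\<^sub>L exp_tau \<tau> A (t - \<tau>)"
  proof -
    have N: "N = Suc (N - 1)" by (simp add: N_def)
    have "sum D {0..N} = D 0 + (\<Sum>i = 0..N - 1. D (Suc i))"
      by (subst N, subst sum.atLeast0_atMost_Suc_shift) simp
    also have "\<dots> = (\<Sum>i = 0..N - 1. A o\<^sub>L (exp_tau_coeff \<tau> i (t - \<tau>) *\<^sub>R blinfun_pow A i))"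
      unfolding D_def
      by (simp, intro sum.cong refl, rule blinfun_eqI,
          simp add: blinfun_pow_Suc scaleR_blinfun.rep_eq blinfun.scaleR_right)
    also have "\<dots> = A o\<^sub>L (\<Sum>i = 0..N - 1. exp_tau_coeff \<tau> i (t - \<tau>) *\<^sub>R blinfun_pow A i)"
      by (rule blinfun_eqI) (simp add: blinfun.sum_left blinfun.sum_right)
    also have "(\<Sum>i = 0..N - 1. exp_tau_coeff \<tau> i (t - \<tau>) *\<^sub>R blinfun_pow A i) = exp_tau \<tau> A (t - \<tau>)"
    proof (rule exp_tau_eq_sum[symmetric, OF tau])
      show "- \<tau> \<le> t - \<tau>" using t by simp
      have "(t - \<tau>) / \<tau> + 1 = t / \<tau>" using tau by (simp add: diff_divide_distrib)
      then show "(t - \<tau>) / \<tau> + 1 \<le> real (N - 1)" using Nr1 fl by linarith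
    qed
    finally show ?thesis .
  qed
  have FE: "F y = exp_tau \<tau> A y" if "y \<in> {0..}" "dist y t < \<tau>" for y
  proof -
    have "y < t + \<tau>" using that by (simp add: dist_real_def)
    then have "y / \<tau> < (t + \<tau>) / \<tau>" using tau by (simp add: divide_strict_right_mono)
    also have "(t + \<tau>) / \<tau> = t / \<tau> + 1" using tau by (simp add: add_divide_distrib)
    finally have "y / \<tau> + 1 \<le> real N" using Nr fl by linarith
    moreover have "- \<tau> \<le> y" using that tau by simp
    ultimately show ?thesis unfolding F_def by (intro exp_tau_eq_sum[symmetric] tau)
  qed
  show ?thesis
    by (rule has_vector_derivative_transform_within[OF dF[unfolded sD] tau]) (use t FE in auto)
qed

lemma exp_tau_initial: "\<tau> > 0 \<Longrightarrow> - \<tau> \<le> u \<Longrightarrow> u \<le> 0 \<Longrightarrow> exp_tau \<tau> A u = id_blinfun"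
  by (cases "u = 0") (simp_all add: exp_tau_def)

lemma exp_tau_first_steps:
  assumes tau: "\<tau> > 0" and u: "0 \<le> u" "u \<le> 2 * \<tau>"
  shows "exp_tau \<tau> A u = id_blinfun + u *\<^sub>R A + (ramp (u - \<tau>) ^ 2 / 2) *\<^sub>R (A o\<^sub>L A)"
proof -
  have "exp_tau \<tau> A u = (\<Sum>j = 0..3. exp_tau_coeff \<tau> j u *\<^sub>R blinfun_pow A j)"
    using tau u by (intro exp_tau_eq_sum) (auto simp: divide_le_eq)
  also have "\<dots> = exp_tau_coeff \<tau> 0 u *\<^sub>R blinfun_pow A 0 + exp_tau_coeff \<tau> 1 u *\<^sub>R blinfun_pow A 1
      + exp_tau_coeff \<tau> 2 u *\<^sub>R blinfun_pow A 2 + exp_tau_coeff \<tau> 3 u *\<^sub>R blinfun_pow A 3"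
    by (simp add: numeral_3_eq_3 numeral_2_eq_2 sum.atLeast0_atMost_Suc)
  also have "exp_tau_coeff \<tau> 3 u = 0" using u by (simp add: exp_tau_coeff_def ramp_def)
  also have "exp_tau_coeff \<tau> 1 u = u" using u by (simp add: exp_tau_coeff_def ramp_def)
  also have "exp_tau_coeff \<tau> 2 u = ramp (u - \<tau>) ^ 2 / 2" by (simp add: exp_tau_coeff_def)
  finally show ?thesis
    by (simp add: blinfun_pow_2 blinfun_pow_Suc[of A 0, simplified])
qed

section \<open>The fundamental solutions \<open>x\<^sub>1\<close> and \<open>x\<^sub>2\<close>\<close>

context
  fixes \<Omega> :: "'a::banach \<Rightarrow>\<^sub>L 'a" and \<tau> :: real
  assumes iso: "bij (blinfun_apply \<Omega>)" and tau: "\<tau> > 0"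
begin

lemma x1_eq_id:
  assumes u: "- \<tau> \<le> u" "u \<le> \<tau>"
  shows "x1 \<tau> \<Omega> u = id_blinfun"
proof (cases "u \<le> 0")
  case True
  then show ?thesis using u tau by (simp add: x1_def exp_tau_initial scaleR_2[symmetric])
next
  case False
  then have "ramp (u - \<tau>) = 0" using u by (simp add: ramp_def)
  then show ?thesis using False u(2) tau
    by (simp add: x1_def exp_tau_first_steps algebra_simps scaleR_2[symmetric])
qed

lemma x2_eq_scaleR_id:
  assumes u: "0 \<le> u" "u \<le> 2 * \<tau>"
  shows "x2 \<tau> \<Omega> u = u *\<^sub>R id_blinfun"
proof -
  have "(- \<Omega>) o\<^sub>L (- \<Omega>) = \<Omega> o\<^sub>L \<Omega>"
    by (rule blinfun_eqI) (simp add: uminus_blinfun.rep_eq blinfun.minus_right)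
  then have E: "exp_tau \<tau> \<Omega> u - exp_tau \<tau> (- \<Omega>) u = u *\<^sub>R \<Omega> + u *\<^sub>R \<Omega>"
    using u tau by (simp add: exp_tau_first_steps)
  show ?thesis unfolding x2_def E
    by (intro blinfun_eqI) (simp add: blinfun.add_right plus_blinfun.rep_eq scaleR_blinfun.rep_eq
        blinfun.scaleR_right inv_blinfun_cancel_left[OF iso])
qed

lemma x2_nonpos: "u \<le> 0 \<Longrightarrow> x2 \<tau> \<Omega> u = 0"
  unfolding x2_def exp_tau_def using tau by auto

lemma x2_has_vector_derivative:
  assumes u: "0 \<le> u"
  shows "(x2 \<tau> \<Omega> has_vector_derivative x1 \<tau> \<Omega> (u - \<tau>)) (at u within {0..})"
proof -
  have lin: "bounded_linear (\<lambda>B. (1/2) *\<^sub>R (inv_blinfun \<Omega> o\<^sub>L B))"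
    by (intro bounded_linear_compose[OF bounded_linear_scaleR_right]
        bounded_bilinear.bounded_linear_right[OF bounded_bilinear_blinfun_compose])
  have "((\<lambda>u. exp_tau \<tau> \<Omega> u - exp_tau \<tau> (- \<Omega>) u) has_vector_derivative
      (\<Omega> o\<^sub>L exp_tau \<tau> \<Omega> (u - \<tau>)) - ((- \<Omega>) o\<^sub>L exp_tau \<tau> (- \<Omega>) (u - \<tau>))) (at u within {0..})"
    by (intro has_vector_derivative_diff exp_tau_has_vector_derivative tau u)
  from bounded_linear.has_vector_derivative[OF lin this]
  have "(x2 \<tau> \<Omega> has_vector_derivative (1/2) *\<^sub>R (inv_blinfun \<Omega> o\<^sub>L
      ((\<Omega> o\<^sub>L exp_tau \<tau> \<Omega> (u - \<tau>)) - ((- \<Omega>) o\<^sub>L exp_tau \<tau> (- \<Omega>) (u - \<tau>))))) (at u within {0..})"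
    by (simp add: x2_def[abs_def])
  moreover have "(1/2) *\<^sub>R (inv_blinfun \<Omega> o\<^sub>L
      ((\<Omega> o\<^sub>L exp_tau \<tau> \<Omega> (u - \<tau>)) - ((- \<Omega>) o\<^sub>L exp_tau \<tau> (- \<Omega>) (u - \<tau>)))) = x1 \<tau> \<Omega> (u - \<tau>)"
    unfolding x1_def
    by (rule blinfun_eqI) (simp add: blinfun.diff_left blinfun.add_left scaleR_blinfun.rep_eq
        uminus_blinfun.rep_eq blinfun.diff_right[symmetric] blinfun.add_right[symmetric]
        inv_blinfun_cancel_left[OF iso])
  ultimately show ?thesis by simp
qed

lemma x1_has_vector_derivative_nonneg:
  assumes u: "0 \<le> u"
  shows "(x1 \<tau> \<Omega> has_vector_derivative (blinfun_pow \<Omega> 2 o\<^sub>L x2 \<tau> \<Omega> (u - \<tau>))) (at u within {0..})"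
proof -
  have "((\<lambda>u. exp_tau \<tau> \<Omega> u + exp_tau \<tau> (- \<Omega>) u) has_vector_derivative
      (\<Omega> o\<^sub>L exp_tau \<tau> \<Omega> (u - \<tau>)) + ((- \<Omega>) o\<^sub>L exp_tau \<tau> (- \<Omega>) (u - \<tau>))) (at u within {0..})"
    by (intro has_vector_derivative_add exp_tau_has_vector_derivative tau u)
  from bounded_linear.has_vector_derivative[OF bounded_linear_scaleR_right this, of "1/2"]
  have "(x1 \<tau> \<Omega> has_vector_derivative (1/2) *\<^sub>R
      ((\<Omega> o\<^sub>L exp_tau \<tau> \<Omega> (u - \<tau>)) + ((- \<Omega>) o\<^sub>L exp_tau \<tau> (- \<Omega>) (u - \<tau>)))) (at u within {0..})"
    by (simp add: x1_def[abs_def])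
  moreover have "(1/2) *\<^sub>R ((\<Omega> o\<^sub>L exp_tau \<tau> \<Omega> (u - \<tau>)) + ((- \<Omega>) o\<^sub>L exp_tau \<tau> (- \<Omega>) (u - \<tau>)))
      = blinfun_pow \<Omega> 2 o\<^sub>L x2 \<tau> \<Omega> (u - \<tau>)"
    unfolding x2_def blinfun_pow_2
    by (rule blinfun_eqI) (simp add: blinfun.diff_left blinfun.add_left scaleR_blinfun.rep_eq
        uminus_blinfun.rep_eq blinfun.diff_right blinfun.scaleR_right inv_blinfun_cancel_right[OF iso])
  ultimately show ?thesis by simp
qed

lemma x1_has_vector_derivative:
  assumes u: "- \<tau> \<le> u"
  shows "(x1 \<tau> \<Omega> has_vector_derivative (blinfun_pow \<Omega> 2 o\<^sub>L x2 \<tau> \<Omega> (u - \<tau>))) (at u within {- \<tau>..})"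
proof (rule has_vector_derivative_within_atLeast_glue[where b=0])
  fix v assume v: "v \<in> {- \<tau>..0}"
  have "(x1 \<tau> \<Omega> has_vector_derivative 0) (at v within {- \<tau>..0})"
    by (rule has_vector_derivative_transform[OF v _ has_vector_derivative_const[of id_blinfun]])
       (use tau in \<open>auto intro!: x1_eq_id\<close>)
  moreover have "x2 \<tau> \<Omega> (v - \<tau>) = 0" using v tau by (intro x2_nonpos) auto
  ultimately show "(x1 \<tau> \<Omega> has_vector_derivative (blinfun_pow \<Omega> 2 o\<^sub>L x2 \<tau> \<Omega> (v - \<tau>)))
      (at v within {- \<tau>..0})"
    by simp
qed (use tau u x1_has_vector_derivative_nonneg in auto)

lemma x1_shift_has_vector_derivative:
  assumes "c \<ge> - \<tau>" "t \<ge> 0"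
  shows "((\<lambda>t. x1 \<tau> \<Omega> (t + c)) has_vector_derivative blinfun_pow \<Omega> 2 o\<^sub>L x2 \<tau> \<Omega> (t + c - \<tau>))
    (at t within {0..})"
  by (rule has_vector_derivative_shift_within[OF x1_has_vector_derivative]) (use assms in auto)

lemma x2_shift_has_vector_derivative:
  assumes "c \<ge> 0" "t \<ge> 0"
  shows "((\<lambda>t. x2 \<tau> \<Omega> (t + c)) has_vector_derivative x1 \<tau> \<Omega> (t + c - \<tau>)) (at t within {0..})"
  by (rule has_vector_derivative_shift_within[OF x2_has_vector_derivative]) (use assms in auto)

lemma continuous_on_x1: "continuous_on {-\<tau>..} (x1 \<tau> \<Omega>)"
  by (rule has_vector_derivative_imp_continuous_on) (use x1_has_vector_derivative in simp)

lemma continuous_on_x2: "continuous_on UNIV (x2 \<tau> \<Omega>)"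
proof -
  have "continuous_on ({..0} \<union> {0..}) (x2 \<tau> \<Omega>)"
  proof (rule continuous_on_closed_Un)
    show "continuous_on {..0} (x2 \<tau> \<Omega>)"
      by (rule continuous_on_eq[OF continuous_on_const[of _ 0]]) (use x2_nonpos in auto)
    show "continuous_on {0..} (x2 \<tau> \<Omega>)"
      by (rule has_vector_derivative_imp_continuous_on) (use x2_has_vector_derivative in simp)
  qed auto
  moreover have "{..0} \<union> {0..} = (UNIV :: real set)" by auto
  ultimately show ?thesis by simp
qed

end

section \<open>Existence\<close>

lemma taylor_remainder_has_integral:
  fixes f f' f'' :: "real \<Rightarrow> 'a::banach"
  assumes f: "C2_with a b f f' f''" and t: "a \<le> t" "t \<le> b"
  shows "((\<lambda>s. (t - s) *\<^sub>R f'' s) has_integral (f t - f a - (t - a) *\<^sub>R f' a)) {a..t}"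
proof -
  from f have d1: "\<And>x. x \<in> {a..b} \<Longrightarrow> (f has_vector_derivative f' x) (at x within {a..b})"
    and d2: "\<And>x. x \<in> {a..b} \<Longrightarrow> (f' has_vector_derivative f'' x) (at x within {a..b})"
    unfolding C2_with_def by simp_all
  have sub: "{a..t} \<subseteq> {a..b}" using t by auto
  have ftc: "(f' has_integral f t - f a) {a..t}"
    by (rule fundamental_theorem_of_calculus[OF t(1)])
       (use sub in \<open>blast intro: has_vector_derivative_within_subset[OF d1]\<close>)
  have cf': "continuous_on {a..t} f'"
    by (rule has_vector_derivative_imp_continuous_on)
       (use sub in \<open>blast intro: has_vector_derivative_within_subset[OF d2]\<close>)
  have bil: "bounded_bilinear (\<lambda>(v::'a) (r::real). r *\<^sub>R v)"
    by (rule bounded_bilinear.flip[OF bounded_bilinear_scaleR])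
  show ?thesis
  proof (rule integration_by_parts_interior[OF bil t(1) cf', where g="\<lambda>s. t - s" and g'="\<lambda>_. -1"])
    show "continuous_on {a..t} (\<lambda>s. t - s)" by (intro continuous_intros)
    fix x assume x: "x \<in> {a<..<t}"
    have x': "x \<in> {a<..<b}" using x t by simp
    have "(f' has_vector_derivative f'' x) (at x within {a<..<b})"
      by (rule has_vector_derivative_within_subset[OF d2]) (use x' in auto)
    then show "(f' has_vector_derivative f'' x) (at x)"
      by (rule has_vector_derivative_within_open[OF x' open_greaterThanLessThan, THEN iffD1])
    show "((\<lambda>s. t - s) has_vector_derivative -1) (at x)"
      by (auto intro!: derivative_eq_intros)
  next
    have "(t - t) *\<^sub>R f' t - (t - a) *\<^sub>R f' a - (f t - f a - (t - a) *\<^sub>R f' a) = - (f t - f a)"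
      by simp
    then show "((\<lambda>x. (-1) *\<^sub>R f' x) has_integral
        ((t - t) *\<^sub>R f' t - (t - a) *\<^sub>R f' a - (f t - f a - (t - a) *\<^sub>R f' a))) {a..t}"
      using has_integral_neg[OF ftc] by simp
  qed
qed

lemma convolution_has_vector_derivative:
  fixes K K' :: "real \<Rightarrow> 'a::banach \<Rightarrow>\<^sub>L 'b::banach" and f :: "real \<Rightarrow> 'a"
  assumes K: "\<And>u. u \<ge> 0 \<Longrightarrow> (K has_vector_derivative K' u) (at u within {0..})"
    and K': "continuous_on {0..} K'"
    and f: "continuous_on {c..d} f" and d: "d \<le> 0" and x: "x \<ge> 0"
  shows "((\<lambda>x. integral {c..d} (\<lambda>s. K (x - s) (f s))) has_vector_derivative
      integral {c..d} (\<lambda>s. K' (x - s) (f s))) (at x within {0..})"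
proof -
  have cK: "continuous_on {0..} K"
    by (rule has_vector_derivative_imp_continuous_on) (use K in simp)
  have "((\<lambda>x. integral (cbox c d) (\<lambda>s. K (x - s) (f s))) has_vector_derivative
      integral (cbox c d) (\<lambda>s. K' (x - s) (f s))) (at x within {0..})"
  proof (rule leibniz_rule_vector_derivative)
    fix x s assume x: "x \<in> {0::real..}" and s: "s \<in> cbox c d"
    have "((\<lambda>x. K (x + - s)) has_vector_derivative K' (x + - s)) (at x within {0..})"
      by (rule has_vector_derivative_shift_within[OF K]) (use x s d in \<open>auto simp: cbox_interval\<close>)
    from has_vector_derivative_blinfun_apply[OF this]
    show "((\<lambda>x. K (x - s) (f s)) has_vector_derivative K' (x - s) (f s)) (at x within {0..})"
      by simp
  next
    fix x :: real assume "x \<in> {0..}"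
    then have "continuous_on {c..d} (\<lambda>s. K (x - s) (f s))"
      using d by (intro blinfun.continuous_on f continuous_on_compose2[OF cK] continuous_intros) auto
    then show "(\<lambda>s. K (x - s) (f s)) integrable_on cbox c d"
      by (simp add: cbox_interval integrable_continuous_interval)
  next
    have "continuous_on ({0..} \<times> cbox c d) (\<lambda>p. K' (fst p - snd p) (f (snd p)))"
      using d by (intro blinfun.continuous_on continuous_on_compose2[OF K'] continuous_on_compose2[OF f]
          continuous_intros) (auto simp: cbox_interval)
    then show "continuous_on ({0..} \<times> cbox c d) (\<lambda>(x, s). K' (x - s) (f s))"
      by (simp add: split_beta)
  qed (use x in auto)
  then show ?thesis by (simp add: cbox_interval)
qed

definition delay_solution ::
  "('a::banach \<Rightarrow>\<^sub>L 'a) \<Rightarrow> real \<Rightarrow> (real \<Rightarrow> 'a) \<Rightarrow> (real \<Rightarrow> 'a) \<Rightarrow> (real \<Rightarrow> 'a) \<Rightarrow> real \<Rightarrow> 'a" where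
  "delay_solution \<Omega> \<tau> \<phi> \<phi>' \<phi>'' t = x1 \<tau> \<Omega> (t + \<tau>) (\<phi> (-2*\<tau>)) + x2 \<tau> \<Omega> (t + 2*\<tau>) (\<phi>' (-2*\<tau>))
      + integral {-2*\<tau>..0} (\<lambda>s. x2 \<tau> \<Omega> (t - s) (\<phi>'' s))"

definition delay_solution_deriv ::
  "('a::banach \<Rightarrow>\<^sub>L 'a) \<Rightarrow> real \<Rightarrow> (real \<Rightarrow> 'a) \<Rightarrow> (real \<Rightarrow> 'a) \<Rightarrow> (real \<Rightarrow> 'a) \<Rightarrow> real \<Rightarrow> 'a" where
  "delay_solution_deriv \<Omega> \<tau> \<phi> \<phi>' \<phi>'' t =
      blinfun_pow \<Omega> 2 (x2 \<tau> \<Omega> t (\<phi> (-2*\<tau>))) + x1 \<tau> \<Omega> (t + \<tau>) (\<phi>' (-2*\<tau>))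
      + integral {-2*\<tau>..0} (\<lambda>s. x1 \<tau> \<Omega> (t - s - \<tau>) (\<phi>'' s))"

definition delay_solution_deriv2 ::
  "('a::banach \<Rightarrow>\<^sub>L 'a) \<Rightarrow> real \<Rightarrow> (real \<Rightarrow> 'a) \<Rightarrow> (real \<Rightarrow> 'a) \<Rightarrow> (real \<Rightarrow> 'a) \<Rightarrow> real \<Rightarrow> 'a" where
  "delay_solution_deriv2 \<Omega> \<tau> \<phi> \<phi>' \<phi>'' t =
      blinfun_pow \<Omega> 2 (x1 \<tau> \<Omega> (t - \<tau>) (\<phi> (-2*\<tau>))) + blinfun_pow \<Omega> 2 (x2 \<tau> \<Omega> t (\<phi>' (-2*\<tau>)))
      + integral {-2*\<tau>..0} (\<lambda>s. blinfun_pow \<Omega> 2 (x2 \<tau> \<Omega> (t - s - 2*\<tau>) (\<phi>'' s)))"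

context
  fixes \<Omega> :: "'a::banach \<Rightarrow>\<^sub>L 'a" and \<tau> :: real and \<phi> \<phi>' \<phi>'' :: "real \<Rightarrow> 'a"
  assumes iso: "bij (blinfun_apply \<Omega>)" and tau: "\<tau> > 0"
    and phi: "C2_with (-2*\<tau>) 0 \<phi> \<phi>' \<phi>''"
begin

private abbreviation "X \<equiv> delay_solution \<Omega> \<tau> \<phi> \<phi>' \<phi>''"
private abbreviation "X' \<equiv> delay_solution_deriv \<Omega> \<tau> \<phi> \<phi>' \<phi>''"
private abbreviation "X'' \<equiv> delay_solution_deriv2 \<Omega> \<tau> \<phi> \<phi>' \<phi>''"

lemma phi_has_derivative: "t \<in> {-2*\<tau>..0} \<Longrightarrow> (\<phi> has_vector_derivative \<phi>' t) (at t within {-2*\<tau>..0})"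
  and phi'_has_derivative: "t \<in> {-2*\<tau>..0} \<Longrightarrow> (\<phi>' has_vector_derivative \<phi>'' t) (at t within {-2*\<tau>..0})"
  and continuous_on_phi'': "continuous_on {-2*\<tau>..0} \<phi>''"
  using phi unfolding C2_with_def by simp_all

lemma delay_solution_initial:
  assumes t: "t \<in> {-2*\<tau>..0}"
  shows "X t = \<phi> t"
proof -
  have x2_eq: "x2 \<tau> \<Omega> (t - s) (\<phi>'' s) = (if s \<in> cbox (-2*\<tau>) t then (t - s) *\<^sub>R \<phi>'' s else 0)"
    if "s \<in> cbox (-2*\<tau>) 0" for s
  proof (cases "s \<le> t")
    case True
    then show ?thesis using that t by (simp add: x2_eq_scaleR_id[OF iso tau] scaleR_blinfun.rep_eq)
  next
    case False
    then show ?thesis by (simp add: x2_nonpos[OF iso tau])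
  qed
  have taylor: "((\<lambda>s. (t - s) *\<^sub>R \<phi>'' s) has_integral
      (\<phi> t - \<phi> (-2*\<tau>) - (t + 2*\<tau>) *\<^sub>R \<phi>' (-2*\<tau>))) {-2*\<tau>..t}"
    using taylor_remainder_has_integral[OF phi] t by simp
  have "((\<lambda>s. if s \<in> cbox (-2*\<tau>) t then (t - s) *\<^sub>R \<phi>'' s else 0) has_integral
        (\<phi> t - \<phi> (-2*\<tau>) - (t + 2*\<tau>) *\<^sub>R \<phi>' (-2*\<tau>))) (cbox (-2*\<tau>) 0)"
    by (rule has_integral_restrict_closed_subinterval) (use taylor t in \<open>simp_all add: cbox_interval\<close>)
  then have "((\<lambda>s. x2 \<tau> \<Omega> (t - s) (\<phi>'' s)) has_integral
      (\<phi> t - \<phi> (-2*\<tau>) - (t + 2*\<tau>) *\<^sub>R \<phi>' (-2*\<tau>))) {-2*\<tau>..0}"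
    by (subst has_integral_cong[OF x2_eq]) (simp_all add: cbox_interval)
  then have "integral {-2*\<tau>..0} (\<lambda>s. x2 \<tau> \<Omega> (t - s) (\<phi>'' s))
      = \<phi> t - \<phi> (-2*\<tau>) - (t + 2*\<tau>) *\<^sub>R \<phi>' (-2*\<tau>)"
    by (rule integral_unique)
  moreover have "x1 \<tau> \<Omega> (t + \<tau>) = id_blinfun" using t by (intro x1_eq_id[OF iso tau]) auto
  moreover have "x2 \<tau> \<Omega> (t + 2*\<tau>) = (t + 2*\<tau>) *\<^sub>R id_blinfun"
    using t by (intro x2_eq_scaleR_id[OF iso tau]) auto
  ultimately show ?thesis by (simp add: delay_solution_def scaleR_blinfun.rep_eq)
qed

lemma delay_solution_has_derivative:
  assumes t: "t \<ge> 0"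
  shows "(X has_vector_derivative X' t) (at t within {0..})"
proof -
  let ?a = "\<phi> (-2*\<tau>)" and ?b = "\<phi>' (-2*\<tau>)"
  have "((\<lambda>t. x1 \<tau> \<Omega> (t + \<tau>) ?a) has_vector_derivative blinfun_pow \<Omega> 2 (x2 \<tau> \<Omega> t ?a))
      (at t within {0..})"
    using has_vector_derivative_blinfun_apply[OF x1_shift_has_vector_derivative[OF iso tau, of \<tau> t]]
      t tau by simp
  moreover have "((\<lambda>t. x2 \<tau> \<Omega> (t + 2*\<tau>) ?b) has_vector_derivative x1 \<tau> \<Omega> (t + \<tau>) ?b)
      (at t within {0..})"
    using has_vector_derivative_blinfun_apply[OF x2_shift_has_vector_derivative[OF iso tau, of "2*\<tau>" t]]
      t tau by (simp add: algebra_simps)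
  moreover have "((\<lambda>t. integral {-2*\<tau>..0} (\<lambda>s. x2 \<tau> \<Omega> (t - s) (\<phi>'' s))) has_vector_derivative
      integral {-2*\<tau>..0} (\<lambda>s. x1 \<tau> \<Omega> (t - s - \<tau>) (\<phi>'' s))) (at t within {0..})"
  proof (rule convolution_has_vector_derivative[where K="x2 \<tau> \<Omega>" and K'="\<lambda>u. x1 \<tau> \<Omega> (u - \<tau>)"])
    show "continuous_on {0..} (\<lambda>u. x1 \<tau> \<Omega> (u - \<tau>))"
      by (rule continuous_on_compose2[OF continuous_on_x1[OF iso tau]]) (auto intro!: continuous_intros)
  qed (use t x2_has_vector_derivative[OF iso tau] continuous_on_phi'' in auto)
  ultimately show ?thesis
    unfolding delay_solution_def[abs_def] delay_solution_deriv_def by (intro has_vector_derivative_add)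
qed

lemma delay_solution_deriv_has_derivative:
  assumes t: "t \<ge> 0"
  shows "(X' has_vector_derivative X'' t) (at t within {0..})"
proof -
  let ?a = "\<phi> (-2*\<tau>)" and ?b = "\<phi>' (-2*\<tau>)"
  have "((\<lambda>t. blinfun_pow \<Omega> 2 (x2 \<tau> \<Omega> t ?a)) has_vector_derivative
      blinfun_pow \<Omega> 2 (x1 \<tau> \<Omega> (t - \<tau>) ?a)) (at t within {0..})"
    by (intro bounded_linear.has_vector_derivative[OF blinfun.bounded_linear_right]
        has_vector_derivative_blinfun_apply x2_has_vector_derivative[OF iso tau] t)
  moreover have "((\<lambda>t. x1 \<tau> \<Omega> (t + \<tau>) ?b) has_vector_derivative blinfun_pow \<Omega> 2 (x2 \<tau> \<Omega> t ?b))
      (at t within {0..})"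
    using has_vector_derivative_blinfun_apply[OF x1_shift_has_vector_derivative[OF iso tau, of \<tau> t]]
      t tau by simp
  moreover have "((\<lambda>t. integral {-2*\<tau>..0} (\<lambda>s. x1 \<tau> \<Omega> (t - s - \<tau>) (\<phi>'' s))) has_vector_derivative
      integral {-2*\<tau>..0} (\<lambda>s. blinfun_pow \<Omega> 2 (x2 \<tau> \<Omega> (t - s - 2*\<tau>) (\<phi>'' s)))) (at t within {0..})"
  proof -
    have cont: "continuous_on {0..} (\<lambda>u. blinfun_pow \<Omega> 2 o\<^sub>L x2 \<tau> \<Omega> (u - 2*\<tau>))"
      by (intro continuous_on_compose2[OF continuous_on_x2[OF iso tau]] continuous_intros) auto
    have "((\<lambda>t. integral {-2*\<tau>..0} (\<lambda>s. x1 \<tau> \<Omega> (t - s - \<tau>) (\<phi>'' s))) has_vector_derivative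
      integral {-2*\<tau>..0} (\<lambda>s. (blinfun_pow \<Omega> 2 o\<^sub>L x2 \<tau> \<Omega> (t - s - 2*\<tau>)) (\<phi>'' s))) (at t within {0..})"
    proof (rule convolution_has_vector_derivative[where K="\<lambda>u. x1 \<tau> \<Omega> (u - \<tau>)"
        and K'="\<lambda>u. blinfun_pow \<Omega> 2 o\<^sub>L x2 \<tau> \<Omega> (u - 2*\<tau>)"])
      fix u :: real assume "u \<ge> 0"
      then show "((\<lambda>u. x1 \<tau> \<Omega> (u - \<tau>)) has_vector_derivative blinfun_pow \<Omega> 2 o\<^sub>L x2 \<tau> \<Omega> (u - 2*\<tau>))
          (at u within {0..})"
        using x1_shift_has_vector_derivative[OF iso tau, of "- \<tau>" u] tau by (simp add: algebra_simps)
    qed (use t cont continuous_on_phi'' in auto)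
    then show ?thesis by simp
  qed
  ultimately show ?thesis
    unfolding delay_solution_deriv_def[abs_def] delay_solution_deriv2_def by (intro has_vector_derivative_add)
qed

lemma delay_solution_deriv2_eq:
  assumes t: "t \<ge> 0"
  shows "X'' t = blinfun_pow \<Omega> 2 (X (t - 2*\<tau>))"
proof -
  have "continuous_on {-2*\<tau>..0} (\<lambda>s. x2 \<tau> \<Omega> (t - 2*\<tau> - s) (\<phi>'' s))"
    by (intro blinfun.continuous_on continuous_on_phi'' continuous_on_compose2[OF continuous_on_x2[OF iso tau]]
        continuous_intros) auto
  then have "blinfun_pow \<Omega> 2 (integral {-2*\<tau>..0} (\<lambda>s. x2 \<tau> \<Omega> (t - 2*\<tau> - s) (\<phi>'' s)))
      = integral {-2*\<tau>..0} (\<lambda>s. blinfun_pow \<Omega> 2 (x2 \<tau> \<Omega> (t - s - 2*\<tau>) (\<phi>'' s)))"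
    by (simp add: integral_blinfun_apply integrable_continuous_interval algebra_simps)
  then show ?thesis
    by (simp add: delay_solution_def delay_solution_deriv2_def blinfun.add_right algebra_simps)
qed

lemma delay_solution_deriv_0: "X' 0 = \<phi>' 0"
proof -
  have "integral {-2*\<tau>..0} (\<lambda>s. x1 \<tau> \<Omega> (0 - s - \<tau>) (\<phi>'' s)) = integral {-2*\<tau>..0} \<phi>''"
  proof (rule integral_cong)
    fix s assume "s \<in> {-2*\<tau>..0}"
    then have "x1 \<tau> \<Omega> (0 - s - \<tau>) = id_blinfun" by (intro x1_eq_id[OF iso tau]) auto
    then show "x1 \<tau> \<Omega> (0 - s - \<tau>) (\<phi>'' s) = \<phi>'' s" by simp
  qed
  also have "\<dots> = \<phi>' 0 - \<phi>' (-2*\<tau>)"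
    by (intro integral_unique fundamental_theorem_of_calculus) (use tau phi'_has_derivative in auto)
  finally show ?thesis
    using x2_nonpos[OF iso tau, of 0] x1_eq_id[OF iso tau, of "0 + \<tau>"] tau
    by (simp add: delay_solution_deriv_def)
qed

theorem classical_solution_delay_solution: "classical_solution \<Omega> \<tau> (\<lambda>t. 0) \<phi> X"
proof -
  define XP where "XP t = (if t \<le> 0 then \<phi>' t else X' t)" for t
  have XP_nonneg: "XP t = X' t" if "t \<ge> 0" for t
    using that delay_solution_deriv_0 by (auto simp: XP_def)
  have XP_initial: "XP t = \<phi>' t" if "t \<le> 0" for t
    using that by (simp add: XP_def)
  have dX: "(X has_vector_derivative XP t) (at t within {-2*\<tau>..})" if "t \<in> {-2*\<tau>..}" for t
  proof (rule has_vector_derivative_within_atLeast_glue[where b=0])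
    fix v assume v: "v \<in> {-2*\<tau>..0}"
    have "(X has_vector_derivative \<phi>' v) (at v within {-2*\<tau>..0})"
      by (rule has_vector_derivative_transform[OF v _ phi_has_derivative[OF v]])
         (rule delay_solution_initial)
    then show "(X has_vector_derivative XP v) (at v within {-2*\<tau>..0})"
      using v by (simp add: XP_initial)
  qed (use that tau delay_solution_has_derivative XP_nonneg in auto)
  have dX'_nonneg: "(XP has_vector_derivative X'' t) (at t within {0..})" if "t \<in> {0..}" for t
    by (rule has_vector_derivative_transform[OF that _ delay_solution_deriv_has_derivative])
       (use that XP_nonneg in auto)
  have "continuous_on ({-2*\<tau>..0} \<union> {0..}) XP"
  proof (rule continuous_on_closed_Un)
    show "continuous_on {-2*\<tau>..0} XP"
      by (rule continuous_on_eq[OF has_vector_derivative_imp_continuous_on[OF phi'_has_derivative]])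
         (auto simp: XP_initial)
    show "continuous_on {0..} XP"
      by (rule has_vector_derivative_imp_continuous_on[OF dX'_nonneg])
  qed auto
  moreover have "{-2*\<tau>..0} \<union> {0..} = {-2*\<tau>..}" using tau by auto
  ultimately have cXP: "continuous_on {-2*\<tau>..} XP" by simp
  have cX: "continuous_on {-2*\<tau>..} X"
    by (rule has_vector_derivative_imp_continuous_on[OF dX])
  have "continuous_on {0..} (\<lambda>t. blinfun_pow \<Omega> 2 (X (t - 2*\<tau>)))"
    by (intro blinfun.continuous_on continuous_on_const continuous_on_compose2[OF cX]
        continuous_intros) auto
  then have cX'': "continuous_on {0..} X''"
    by (rule continuous_on_eq) (simp add: delay_solution_deriv2_eq)
  have dX'_initial: "(XP has_vector_derivative \<phi>'' t) (at t within {-2*\<tau>..0})" if "t \<in> {-2*\<tau>..0}" for t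
    by (rule has_vector_derivative_transform[OF that _ phi'_has_derivative[OF that]])
       (auto simp: XP_initial)
  show ?thesis
    unfolding classical_solution_def
    by (intro exI[of _ XP] exI[of _ \<phi>''] exI[of _ X''] conjI ballI dX cXP dX'_initial
        continuous_on_phi'' dX'_nonneg cX'' delay_solution_initial)
       (simp_all add: delay_solution_deriv2_eq)
qed

end

section \<open>Uniqueness\<close>

lemma classical_solution_diff:
  assumes "classical_solution \<Omega> \<tau> f \<phi> x" and "classical_solution \<Omega> \<tau> g \<psi> y"
  shows "classical_solution \<Omega> \<tau> (\<lambda>t. f t - g t) (\<lambda>t. \<phi> t - \<psi> t) (\<lambda>t. x t - y t)"
proof -
  obtain x' xl'' xr'' where
    dx: "\<And>t. t \<in> {-2*\<tau>..} \<Longrightarrow> (x has_vector_derivative x' t) (at t within {-2*\<tau>..})" and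
    cx': "continuous_on {-2*\<tau>..} x'" and
    dxl: "\<And>t. t \<in> {-2*\<tau>..0} \<Longrightarrow> (x' has_vector_derivative xl'' t) (at t within {-2*\<tau>..0})" and
    cxl: "continuous_on {-2*\<tau>..0} xl''" and
    dxr: "\<And>t. t \<in> {0..} \<Longrightarrow> (x' has_vector_derivative xr'' t) (at t within {0..})" and
    cxr: "continuous_on {0..} xr''" and
    eqx: "\<And>t. t \<in> {0..} \<Longrightarrow> xr'' t - blinfun_pow \<Omega> 2 (x (t - 2*\<tau>)) = f t" and
    inx: "\<And>t. t \<in> {-2*\<tau>..0} \<Longrightarrow> x t = \<phi> t"
    using assms(1) unfolding classical_solution_def by blast
  obtain y' yl'' yr'' where
    dy: "\<And>t. t \<in> {-2*\<tau>..} \<Longrightarrow> (y has_vector_derivative y' t) (at t within {-2*\<tau>..})" and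
    cy': "continuous_on {-2*\<tau>..} y'" and
    dyl: "\<And>t. t \<in> {-2*\<tau>..0} \<Longrightarrow> (y' has_vector_derivative yl'' t) (at t within {-2*\<tau>..0})" and
    cyl: "continuous_on {-2*\<tau>..0} yl''" and
    dyr: "\<And>t. t \<in> {0..} \<Longrightarrow> (y' has_vector_derivative yr'' t) (at t within {0..})" and
    cyr: "continuous_on {0..} yr''" and
    eqy: "\<And>t. t \<in> {0..} \<Longrightarrow> yr'' t - blinfun_pow \<Omega> 2 (y (t - 2*\<tau>)) = g t" and
    iny: "\<And>t. t \<in> {-2*\<tau>..0} \<Longrightarrow> y t = \<psi> t"
    using assms(2) unfolding classical_solution_def by blast
  have "(xr'' t - yr'' t) - blinfun_pow \<Omega> 2 (x (t - 2*\<tau>) - y (t - 2*\<tau>)) = f t - g t"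
    if "t \<in> {0..}" for t
    using eqx[OF that] eqy[OF that] by (simp add: blinfun.diff_right algebra_simps)
  then show ?thesis
    unfolding classical_solution_def
    by (intro exI[of _ "\<lambda>t. x' t - y' t"] exI[of _ "\<lambda>t. xl'' t - yl'' t"]
        exI[of _ "\<lambda>t. xr'' t - yr'' t"] conjI ballI has_vector_derivative_diff continuous_on_diff
        dx dy cx' cy' dxl dyl cxl cyl dxr dyr cxr cyr) (simp_all add: inx iny)
qed

lemma second_derivative_zero_imp_zero:
  fixes z :: "real \<Rightarrow> 'a::real_normed_vector"
  assumes "\<And>t. t \<in> {a..b} \<Longrightarrow> (z has_vector_derivative z' t) (at t within {a..b})"
    and "\<And>t. t \<in> {a..b} \<Longrightarrow> (z' has_vector_derivative 0) (at t within {a..b})"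
    and "z a = 0" "z' a = 0" "a \<le> b" "t \<in> {a..b}"
  shows "z t = 0"
proof -
  obtain c where "\<And>t. t \<in> {a..b} \<Longrightarrow> z' t = c"
    using has_vector_derivative_zero_constant[OF convex_real_interval(5) assms(2)] by metis
  with assms(4,5) have "\<And>t. t \<in> {a..b} \<Longrightarrow> (z has_vector_derivative 0) (at t within {a..b})"
    using assms(1) by force
  then obtain d where "\<And>t. t \<in> {a..b} \<Longrightarrow> z t = d"
    using has_vector_derivative_zero_constant[OF convex_real_interval(5)] by metis
  with assms(3,5,6) show ?thesis by force
qed

lemma classical_solution_zero_data_vanishes:
  assumes tau: "\<tau> > 0" and z: "classical_solution \<Omega> \<tau> (\<lambda>t. 0) (\<lambda>t. 0) z" and t: "t \<ge> -2*\<tau>"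
  shows "z t = 0"
proof -
  obtain z' zl'' zr'' where
    dz: "\<And>t. t \<in> {-2*\<tau>..} \<Longrightarrow> (z has_vector_derivative z' t) (at t within {-2*\<tau>..})" and
    dz': "\<And>t. t \<in> {0..} \<Longrightarrow> (z' has_vector_derivative zr'' t) (at t within {0..})" and
    eq: "\<And>t. t \<in> {0..} \<Longrightarrow> zr'' t - blinfun_pow \<Omega> 2 (z (t - 2*\<tau>)) = 0" and
    initial: "\<And>t. t \<in> {-2*\<tau>..0} \<Longrightarrow> z t = 0"
    using z unfolding classical_solution_def by blast
  have "z' 0 = 0"
  proof (rule vector_derivative_unique_within_closed_interval)
    show "(z has_vector_derivative z' 0) (at 0 within cbox (-2*\<tau>) 0)"
      by (rule has_vector_derivative_within_subset[OF dz]) (use tau in \<open>auto simp: cbox_interval\<close>)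
    show "(z has_vector_derivative 0) (at 0 within cbox (-2*\<tau>) 0)"
      by (rule has_vector_derivative_transform[OF _ _ has_vector_derivative_const[of 0]])
         (use tau initial in \<open>auto simp: cbox_interval\<close>)
  qed (use tau in \<open>auto simp: cbox_interval\<close>)
  have "\<forall>t\<in>{-2*\<tau>..2 * real n * \<tau>}. z t = 0" for n :: nat
  proof (induction n)
    case 0
    then show ?case using initial by simp
  next
    case (Suc n)
    have step: "z t = 0" if "t \<in> {0..2 * real (Suc n) * \<tau>}" for t
    proof (rule second_derivative_zero_imp_zero[where z'=z' and a=0 and b="2 * real (Suc n) * \<tau>"])
      fix u assume u: "u \<in> {0..2 * real (Suc n) * \<tau>}"
      show "(z has_vector_derivative z' u) (at u within {0..2 * real (Suc n) * \<tau>})"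
        by (rule has_vector_derivative_within_subset[OF dz]) (use u tau in auto)
      have "z (u - 2*\<tau>) = 0" using Suc.IH u by (auto simp: algebra_simps)
      then have "zr'' u = 0" using eq[of u] u by simp
      with dz'[of u] u show "(z' has_vector_derivative 0) (at u within {0..2 * real (Suc n) * \<tau>})"
        by (auto intro: has_vector_derivative_within_subset)
    qed (use that initial tau \<open>z' 0 = 0\<close> in auto)
    show ?case
    proof
      fix t assume "t \<in> {-2*\<tau>..2 * real (Suc n) * \<tau>}"
      then show "z t = 0" using initial step by (cases "t \<le> 0") auto
    qed
  qed
  moreover obtain n :: nat where "t / (2*\<tau>) \<le> real n" using real_arch_simple by blast
  then have "t \<le> 2 * real n * \<tau>" using tau by (simp add: divide_le_eq mult.commute mult.left_commute)
  ultimately show ?thesis using t by auto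
qed

theorem mainTheorem5:
  fixes \<Omega> :: "'a::banach \<Rightarrow>\<^sub>L 'a" and \<tau> :: real
    and \<phi> \<phi>' \<phi>'' :: "real \<Rightarrow> 'a"
  assumes iso: "bij (blinfun_apply \<Omega>)"
    and tau: "\<tau> > 0"
    and phi: "C2_with (-2*\<tau>) 0 \<phi> \<phi>' \<phi>''"
  shows "classical_solution \<Omega> \<tau> (\<lambda>t. 0) \<phi>
           (\<lambda>t. x1 \<tau> \<Omega> (t + \<tau>) (\<phi> (-2*\<tau>)) + x2 \<tau> \<Omega> (t + 2*\<tau>) (\<phi>' (-2*\<tau>))
                + integral {-2*\<tau>..0} (\<lambda>s. x2 \<tau> \<Omega> (t - s) (\<phi>'' s)))
    \<and> (\<forall>y. classical_solution \<Omega> \<tau> (\<lambda>t. 0) \<phi> y \<longrightarrow>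
          (\<forall>t\<ge>-2*\<tau>. y t = x1 \<tau> \<Omega> (t + \<tau>) (\<phi> (-2*\<tau>)) + x2 \<tau> \<Omega> (t + 2*\<tau>) (\<phi>' (-2*\<tau>))
                + integral {-2*\<tau>..0} (\<lambda>s. x2 \<tau> \<Omega> (t - s) (\<phi>'' s))))"
proof -
  let ?x = "delay_solution \<Omega> \<tau> \<phi> \<phi>' \<phi>''"
  have x: "classical_solution \<Omega> \<tau> (\<lambda>t. 0) \<phi> ?x"
    by (rule classical_solution_delay_solution[OF iso tau phi])
  have "y t = ?x t" if y: "classical_solution \<Omega> \<tau> (\<lambda>t. 0) \<phi> y" and t: "t \<ge> -2*\<tau>" for y t
  proof -
    have "classical_solution \<Omega> \<tau> (\<lambda>t. 0) (\<lambda>t. 0) (\<lambda>t. y t - ?x t)"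
      using classical_solution_diff[OF y x] by simp
    from classical_solution_zero_data_vanishes[OF tau this t] show ?thesis by simp
  qed
  with x show ?thesis
    unfolding delay_solution_def by blast
qed

end
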